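(* Let $\mathcal{X}$ and $\mathcal{H}$ be finite sets and let $P_\mathcal{D}$ be a probability distribution on $\mathcal{X}$ (the data distribution). Let $\{P_{\theta_I}(\mathbf{x}|\mathbf{h})\}_{\theta_I\in\Theta_I}$ be a family of conditional distributions of $\mathbf{x}\in\mathcal{X}$ given $\mathbf{h}\in\mathcal{H}$ and $\{P_{\theta_J}(\mathbf{h})\}_{\theta_J\in\Theta_J}$ a family of distributions on $\mathcal{H}$, and for $\theta=(\theta_I,\theta_J)$ let $P_\theta(\mathbf{x})=\sum_{\mathbf{h}}P_{\theta_I}(\mathbf{x}|\mathbf{h})P_{\theta_J}(\mathbf{h})$ and $L(\theta)=\mathbb{E}_{\mathbf{x}\sim P_\mathcal{D}}[\log P_\theta(\mathbf{x})]$. Let $\theta^\ast=(\theta_I^\ast,\theta_J^\ast)$ be a maximizer of $L$. Suppose $(\hat\theta_I,\hat q)$ is a maximizer of $$(\theta_I,q)\mapsto \mathbb{E}_{\mathbf{x}\sim P_\mathcal{D}}\Big[\log \sum_{\mathbf{h}} P_{\theta_I}(\mathbf{x}|\mathbf{h})\, q_\mathcal{D}(\mathbf{h})\Big],$$ where $\theta_I$ ranges over $\Theta_I$ and $q$ ranges over all conditional probability distributions $q(\mathbf{h}|\mathbf{x})$ on $\mathcal{H}$ given $\mathbf{x}\in\mathcal{X}$, and $q_\mathcal{D}(\mathbf{h}):=\sum_{\tilde{\mathbf{x}}}q(\mathbf{h}|\tilde{\mathbf{x}})P_\mathcal{D}(\tilde{\mathbf{x}})$. Let $\hat q_\mathcal{D}$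 be the distribution on $\mathcal{H}$ associated with $\hat q$, and assume the maximal value above is finite. Then: (1) If there exists $\hat\theta_J\in\Theta_J$ with $P_{\hat\theta_J}(\mathbf{h})=\hat q_\mathcal{D}(\mathbf{h})$ for all $\mathbf{h}$, then $(\hat\theta_I,\hat\theta_J)$ is a global maximizer of $L$; in particular if the maximizer of $L$ is unique then $(\hat\theta_I,\hat\theta_J)=(\theta_I^\ast,\theta_J^\ast)$. (2) For every $\theta_J\in\Theta_J$, $$L(\theta_I^\ast,\theta_J^\ast)-L(\hat\theta_I,\theta_J)\le \mathrm{KL}\big(\hat q_\mathcal{D}\,\|\,P_{\theta_J}\big).$$
   Context: $\mathrm{KL}(p\|r)=\sum_{\mathbf{h}}p(\mathbf{h})\log\frac{p(\mathbf{h})}{r(\mathbf{h})}$ denotes the Kullback–Leibler divergence (possibly $+\infty$). The parameter $\hat\theta_I$ is called the best optimistic lower layer (BOLL). *)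

theory Defs
  imports "HOL-Analysis.Analysis"
begin

definition elog :: "real \<Rightarrow> ereal" where
  "elog t = (if t > 0 then ereal (ln t) else -\<infinity>)"

text \<open>Expectation of an ereal-valued function under a finite distribution p
  (terms with p x = 0 contribute 0, i.e. the convention 0 log 0 = 0).\<close>
definition expect :: "('x::finite \<Rightarrow> real) \<Rightarrow> ('x \<Rightarrow> ereal) \<Rightarrow> ereal" where
  "expect p f = (\<Sum>x\<in>{x. p x \<noteq> 0}. ereal (p x) * f x)"

definition is_distr :: "('a::finite \<Rightarrow> real) \<Rightarrow> bool" where
  "is_distr p \<longleftrightarrow> (\<forall>a. 0 \<le> p a) \<and> (\<Sum>a\<in>UNIV. p a) = 1"

definition KL :: "('h::finite \<Rightarrow> real) \<Rightarrow> ('h \<Rightarrow> real) \<Rightarrow> ereal" where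
  "KL p r = (\<Sum>h\<in>UNIV. if p h = 0 then 0 else if r h = 0 then \<infinity>
                         else ereal (p h * ln (p h / r h)))"

text \<open>Marginal model P_theta(x) = sum_h P_thetaI(x|h) P_thetaJ(h);
  cond tI x h stands for P_tI(x|h), prior tJ h for P_tJ(h).\<close>
definition marg :: "('a \<Rightarrow> 'x \<Rightarrow> 'h::finite \<Rightarrow> real) \<Rightarrow> 'a \<Rightarrow> ('h \<Rightarrow> real) \<Rightarrow> 'x \<Rightarrow> real" where
  "marg cond tI r x = (\<Sum>h\<in>UNIV. cond tI x h * r h)"

definition loglik :: "('x::finite \<Rightarrow> real) \<Rightarrow> ('a \<Rightarrow> 'x \<Rightarrow> 'h::finite \<Rightarrow> real)
    \<Rightarrow> ('b \<Rightarrow> 'h \<Rightarrow> real) \<Rightarrow> 'a \<Rightarrow> 'b \<Rightarrow> ereal" where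
  "loglik PD cond prior tI tJ = expect PD (\<lambda>x. elog (marg cond tI (prior tJ) x))"

text \<open>Aggregated posterior q_D(h) = sum_x q(h|x) P_D(x); q x h stands for q(h|x).\<close>
definition aggr :: "('x::finite \<Rightarrow> real) \<Rightarrow> ('x \<Rightarrow> 'h \<Rightarrow> real) \<Rightarrow> 'h \<Rightarrow> real" where
  "aggr PD q h = (\<Sum>x\<in>UNIV. q x h * PD x)"

definition boll_obj :: "('x::finite \<Rightarrow> real) \<Rightarrow> ('a \<Rightarrow> 'x \<Rightarrow> 'h::finite \<Rightarrow> real)
    \<Rightarrow> 'a \<Rightarrow> ('x \<Rightarrow> 'h \<Rightarrow> real) \<Rightarrow> ereal" where
  "boll_obj PD cond tI q = expect PD (\<lambda>x. elog (marg cond tI (aggr PD q) x))"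

end

theory Submission
  imports Defs
begin

(* Fix the lower layer tI and regard the log-likelihood as a function
   prior_ll PD cond tI s of the prior s on the hidden layer.  Two facts drive the theorem.
   (a) Every model likelihood is a value of the BOLL objective, obtained with the
       x-independent "posterior" q(h|x) = s(h), whose aggregate is s itself.  Hence the
       optimal BOLL value, attained at the aggregate prior r = aggr PD qh, dominates
       every L(tI, tJ); when some prior of the family equals r this gives part (1).
   (b) A Jensen (EM) lower bound: prior_ll r + sum_h r'(h) ln (s h / r h) <= prior_ll s,
       where r' = post_avg r averages the posteriors P(h|x) over the data.  Applied with
       s = r' and the optimality of r, Gibbs' inequality forces r' = r (r is an EM fixed
       point); applied with s = prior tJ it then yields prior_ll r - prior_ll s <= KL r s,
       which together with (a) is part (2). *)

lemma ratio_log_bound: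
  fixes a b :: real
  assumes a: "0 < a" and b: "0 < b"
  shows "a - b \<le> a * ln (a / b)"
    and "a * ln (a / b) = a - b \<Longrightarrow> a = b"
proof -
  have diff_eq: "a - b = a * (1 - b / a)" and log_eq: "a * ln (a / b) = a * - ln (b / a)"
    using a b by (simp_all add: field_simps ln_div)
  have "ln (b / a) \<le> b / a - 1"
    using a b by (intro ln_le_minus_one) simp
  then show "a - b \<le> a * ln (a / b)"
    unfolding diff_eq log_eq using a by (intro mult_left_mono) auto
  assume "a * ln (a / b) = a - b"
  then have "a * - ln (b / a) = a * (1 - b / a)"
    unfolding diff_eq log_eq .
  then have "- ln (b / a) = 1 - b / a"
    using a by (subst (asm) mult_left_cancel) auto
  then have "b / a = 1"
    using a b by (intro ln_eq_minus_one) simp_all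
  then show "a = b" using a by simp
qed

lemma gibbs_equality:
  fixes p r :: "'h::finite \<Rightarrow> real"
  assumes p: "is_distr p" and r: "is_distr r"
    and support: "\<And>h. 0 < p h \<Longrightarrow> 0 < r h"
    and le: "(\<Sum>h\<in>UNIV. p h * ln (p h / r h)) \<le> 0"
  shows "p = r"
proof -
  have p_nonneg: "0 \<le> p h" and r_nonneg: "0 \<le> r h" for h
    using p r by (auto simp: is_distr_def)
  define e where "e h = p h * ln (p h / r h) - (p h - r h)" for h
  have e_nonneg: "0 \<le> e h" for h
  proof (cases "0 < p h")
    case True
    then show ?thesis using ratio_log_bound(1)[OF True support[OF True]] by (simp add: e_def)
  qed (use p_nonneg[of h] r_nonneg[of h] in \<open>simp add: e_def\<close>)
  have "(\<Sum>h\<in>UNIV. e h) = (\<Sum>h\<in>UNIV. p h * ln (p h / r h))"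
    using p r by (simp add: e_def sum_subtractf is_distr_def)
  with le have "(\<Sum>h\<in>UNIV. e h) \<le> 0" by simp
  moreover have "0 \<le> (\<Sum>h\<in>UNIV. e h)" by (rule sum_nonneg) (rule e_nonneg)
  ultimately have "(\<Sum>h\<in>UNIV. e h) = 0" by (rule antisym)
  then have e_zero: "e h = 0" for h
    using e_nonneg by (simp add: sum_nonneg_eq_0_iff)
  show "p = r"
  proof
    fix h
    show "p h = r h"
    proof (cases "0 < p h")
      case True
      then show ?thesis using ratio_log_bound(2)[OF True support[OF True]] e_zero[of h]
        by (simp add: e_def)
    qed (use p_nonneg[of h] e_zero[of h] in \<open>simp add: e_def\<close>)
  qed
qed

lemma ln_weighted_mean:
  fixes w z :: "'i \<Rightarrow> real"
  assumes A: "finite A" and w_nonneg: "\<And>i. i \<in> A \<Longrightarrow> 0 \<le> w i"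
    and w_sum: "(\<Sum>i\<in>A. w i) = 1"
    and z_pos: "\<And>i. i \<in> A \<Longrightarrow> 0 < w i \<Longrightarrow> 0 < z i"
  shows "0 < (\<Sum>i\<in>A. w i * z i)"
    and "(\<Sum>i\<in>A. w i * ln (z i)) \<le> ln (\<Sum>i\<in>A. w i * z i)"
proof -
  define T where "T = {i \<in> A. 0 < w i}"
  have T: "finite T" "T \<subseteq> A" using A by (auto simp: T_def)
  have restrict: "(\<Sum>i\<in>A. w i * f i) = (\<Sum>i\<in>T. w i * f i)" for f :: "'i \<Rightarrow> real"
    by (rule sum.mono_neutral_right[OF A T(2)]) (use w_nonneg in \<open>force simp: T_def\<close>)
  have "(\<Sum>i\<in>T. w i) = 1"
    using restrict[of "\<lambda>_. 1"] w_sum by simp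
  then have "T \<noteq> {}" by auto
  show "0 < (\<Sum>i\<in>A. w i * z i)"
    unfolding restrict using T(1) \<open>T \<noteq> {}\<close> z_pos by (intro sum_pos) (auto simp: T_def)
  have "(\<Sum>i\<in>T. w i * ln (z i)) \<le> ln (\<Sum>i\<in>T. w i *\<^sub>R z i)"
    by (rule concave_on_sum[OF T(1) \<open>T \<noteq> {}\<close> ln_concave \<open>(\<Sum>i\<in>T. w i) = 1\<close>])
      (use z_pos in \<open>auto simp: T_def\<close>)
  then show "(\<Sum>i\<in>A. w i * ln (z i)) \<le> ln (\<Sum>i\<in>A. w i * z i)"
    unfolding restrict by simp
qed

(* Jensen's inequality for one mixture sum_h c h * r h: reweighting the components from r
   to s changes the log of the mixture by at least the posterior-weighted log-ratio.  The
   support condition keeps all logarithms finite. *)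
lemma log_mixture_bound:
  fixes c r s :: "'h::finite \<Rightarrow> real"
  assumes c_nonneg: "\<And>h. 0 \<le> c h" and r_nonneg: "\<And>h. 0 \<le> r h"
    and s_nonneg: "\<And>h. 0 \<le> s h"
    and mix_pos: "0 < (\<Sum>h\<in>UNIV. c h * r h)"
    and support: "\<And>h. 0 < c h * r h \<Longrightarrow> 0 < s h"
  shows "0 < (\<Sum>h\<in>UNIV. c h * s h)"
    and "(\<Sum>h\<in>UNIV. c h * r h / (\<Sum>h\<in>UNIV. c h * r h) * ln (s h / r h))
           \<le> ln (\<Sum>h\<in>UNIV. c h * s h) - ln (\<Sum>h\<in>UNIV. c h * r h)"
proof -
  define M where "M = (\<Sum>h\<in>UNIV. c h * r h)"
  define w where "w h = c h * r h / M" for h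
  have M_pos: "0 < M" using mix_pos by (simp add: M_def)
  have w_nonneg: "0 \<le> w h" for h
    using M_pos c_nonneg[of h] r_nonneg[of h] by (simp add: w_def)
  have w_sum: "(\<Sum>h\<in>UNIV. w h) = 1"
    using M_pos by (simp add: w_def M_def flip: sum_divide_distrib)
  have ratio_pos: "0 < s h / r h" if "0 < w h" for h
  proof -
    have "0 < c h * r h" using that M_pos by (simp add: w_def zero_less_divide_iff)
    then show ?thesis
      using support c_nonneg[of h] r_nonneg[of h] by (simp add: zero_less_mult_iff)
  qed
  have jensen: "0 < (\<Sum>h\<in>UNIV. w h * (s h / r h))"
    "(\<Sum>h\<in>UNIV. w h * ln (s h / r h)) \<le> ln (\<Sum>h\<in>UNIV. w h * (s h / r h))"
    using ln_weighted_mean[of UNIV w "\<lambda>h. s h / r h"] w_nonneg w_sum ratio_pos by auto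
  have mean_le: "(\<Sum>h\<in>UNIV. w h * (s h / r h)) \<le> (\<Sum>h\<in>UNIV. c h * s h) / M"
    unfolding sum_divide_distrib
    by (rule sum_mono) (use M_pos c_nonneg s_nonneg in \<open>simp add: w_def\<close>)
  with jensen(1) have "0 < (\<Sum>h\<in>UNIV. c h * s h) / M" by linarith
  with M_pos show mix_s_pos: "0 < (\<Sum>h\<in>UNIV. c h * s h)"
    by (simp add: zero_less_divide_iff)
  have "(\<Sum>h\<in>UNIV. w h * ln (s h / r h)) \<le> ln (\<Sum>h\<in>UNIV. w h * (s h / r h))"
    by (fact jensen(2))
  also have "\<dots> \<le> ln ((\<Sum>h\<in>UNIV. c h * s h) / M)"
    using jensen(1) mean_le by simp
  also have "\<dots> = ln (\<Sum>h\<in>UNIV. c h * s h) - ln M"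
    using mix_s_pos M_pos by (simp add: ln_div)
  finally show "(\<Sum>h\<in>UNIV. c h * r h / (\<Sum>h\<in>UNIV. c h * r h) * ln (s h / r h))
           \<le> ln (\<Sum>h\<in>UNIV. c h * s h) - ln (\<Sum>h\<in>UNIV. c h * r h)"
    by (simp add: w_def M_def)
qed

lemma sum_ereal_minf:
  fixes f :: "'i \<Rightarrow> ereal"
  assumes "finite A" "i \<in> A" "f i = -\<infinity>" "\<And>j. j \<in> A \<Longrightarrow> f j \<noteq> \<infinity>"
  shows "sum f A = -\<infinity>"
  using assms
proof (induction A rule: finite_induct)
  case (insert j A)
  have "f j \<noteq> \<infinity>" and "sum f A \<noteq> \<infinity>"
    using insert.prems(3) insert.hyps(1) by (auto simp: sum_Pinfty)
  moreover have "f j = -\<infinity> \<or> sum f A = -\<infinity>"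
    using insert by (cases "i = j") auto
  ultimately show ?case
    using insert.hyps by auto
qed simp

lemma expect_elog_real:
  assumes "\<And>x. p x \<noteq> 0 \<Longrightarrow> 0 < m x"
  shows "expect p (\<lambda>x. elog (m x)) = ereal (\<Sum>x\<in>UNIV. p x * ln (m x))"
proof -
  have "expect p (\<lambda>x. elog (m x)) = (\<Sum>x\<in>{x. p x \<noteq> 0}. ereal (p x * ln (m x)))"
    unfolding expect_def by (rule sum.cong) (use assms in \<open>auto simp: elog_def\<close>)
  also have "\<dots> = ereal (\<Sum>x\<in>{x. p x \<noteq> 0}. p x * ln (m x))" by simp
  also have "(\<Sum>x\<in>{x. p x \<noteq> 0}. p x * ln (m x)) = (\<Sum>x\<in>UNIV. p x * ln (m x))"
    by (rule sum.mono_neutral_left) auto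
  finally show ?thesis .
qed

lemma expect_elog_pos:
  assumes p_nonneg: "\<And>x. 0 \<le> p x" and fin: "expect p (\<lambda>x. elog (m x)) \<noteq> -\<infinity>"
    and "p x \<noteq> 0"
  shows "0 < m x"
proof (rule ccontr)
  assume "\<not> 0 < m x"
  have "expect p (\<lambda>x. elog (m x)) = -\<infinity>"
    unfolding expect_def
  proof (rule sum_ereal_minf)
    show "ereal (p x) * elog (m x) = -\<infinity>"
      using \<open>\<not> 0 < m x\<close> \<open>p x \<noteq> 0\<close> p_nonneg[of x] by (simp add: elog_def)
    show "ereal (p y) * elog (m y) \<noteq> \<infinity>" for y
      using p_nonneg[of y] by (cases "p y = 0") (simp_all add: elog_def)
  qed (use \<open>p x \<noteq> 0\<close> in auto)
  with fin show False ..
qed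

definition prior_ll :: "('x::finite \<Rightarrow> real) \<Rightarrow> ('a \<Rightarrow> 'x \<Rightarrow> 'h::finite \<Rightarrow> real)
    \<Rightarrow> 'a \<Rightarrow> ('h \<Rightarrow> real) \<Rightarrow> ereal" where
  "prior_ll PD cond tI s = expect PD (\<lambda>x. elog (marg cond tI s x))"

lemma loglik_eq_prior_ll: "loglik PD cond prior tI tJ = prior_ll PD cond tI (prior tJ)"
  by (simp add: loglik_def prior_ll_def)

lemma boll_obj_eq_prior_ll: "boll_obj PD cond tI q = prior_ll PD cond tI (aggr PD q)"
  by (simp add: boll_obj_def prior_ll_def)

lemma prior_ll_finite:
  assumes PD_nonneg: "\<And>x. 0 \<le> PD x" and fin: "prior_ll PD cond tI s \<noteq> -\<infinity>"
  shows prior_ll_marg_pos: "\<And>x. PD x \<noteq> 0 \<Longrightarrow> 0 < marg cond tI s x"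
    and prior_ll_real: "prior_ll PD cond tI s = ereal (\<Sum>x\<in>UNIV. PD x * ln (marg cond tI s x))"
proof -
  show pos: "0 < marg cond tI s x" if "PD x \<noteq> 0" for x
    using expect_elog_pos[of PD "marg cond tI s", OF PD_nonneg _ that] fin
    by (simp add: prior_ll_def)
  show "prior_ll PD cond tI s = ereal (\<Sum>x\<in>UNIV. PD x * ln (marg cond tI s x))"
    unfolding prior_ll_def by (rule expect_elog_real) (rule pos)
qed

(* The EM update of the prior: the data average of the posteriors
   P(h|x) = cond tI x h * r h / marg cond tI r x. *)
definition post_avg :: "('x::finite \<Rightarrow> real) \<Rightarrow> ('a \<Rightarrow> 'x \<Rightarrow> 'h::finite \<Rightarrow> real)
    \<Rightarrow> 'a \<Rightarrow> ('h \<Rightarrow> real) \<Rightarrow> 'h \<Rightarrow> real" where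
  "post_avg PD cond tI r h = (\<Sum>x\<in>UNIV. PD x * (cond tI x h * r h / marg cond tI r x))"

(* EM lower bound: passing from the prior r to s increases the log-likelihood by at least
   the expected log-ratio under the averaged posterior (Jensen applied for every datum). *)
lemma prior_ll_lower_bound:
  assumes PD_nonneg: "\<And>x. 0 \<le> PD x" and cond_nonneg: "\<And>x h. 0 \<le> cond tI x h"
    and r_nonneg: "\<And>h. 0 \<le> r h" and s_nonneg: "\<And>h. 0 \<le> s h"
    and fin: "prior_ll PD cond tI r \<noteq> -\<infinity>"
    and support: "\<And>x h. PD x \<noteq> 0 \<Longrightarrow> 0 < cond tI x h * r h \<Longrightarrow> 0 < s h"
  shows "prior_ll PD cond tI r + ereal (\<Sum>h\<in>UNIV. post_avg PD cond tI r h * ln (s h / r h))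
           \<le> prior_ll PD cond tI s"
proof -
  let ?M = "\<lambda>s x. marg cond tI s x"
  have mixture: "0 < ?M s x \<and>
      (\<Sum>h\<in>UNIV. cond tI x h * r h / ?M r x * ln (s h / r h)) \<le> ln (?M s x) - ln (?M r x)"
    if "PD x \<noteq> 0" for x
    using log_mixture_bound[of "cond tI x" r s] cond_nonneg r_nonneg s_nonneg
      prior_ll_marg_pos[OF PD_nonneg fin that] support[OF that]
    by (simp add: marg_def)
  have s_real: "prior_ll PD cond tI s = ereal (\<Sum>x\<in>UNIV. PD x * ln (?M s x))"
    unfolding prior_ll_def by (rule expect_elog_real) (use mixture in blast)
  have "(\<Sum>h\<in>UNIV. post_avg PD cond tI r h * ln (s h / r h))
      = (\<Sum>x\<in>UNIV. PD x * (\<Sum>h\<in>UNIV. cond tI x h * r h / ?M r x * ln (s h / r h)))"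
    unfolding post_avg_def sum_distrib_right sum_distrib_left
    by (subst sum.swap) (simp add: mult.assoc)
  also have "\<dots> \<le> (\<Sum>x\<in>UNIV. PD x * (ln (?M s x) - ln (?M r x)))"
  proof (rule sum_mono)
    fix x
    show "PD x * (\<Sum>h\<in>UNIV. cond tI x h * r h / ?M r x * ln (s h / r h))
        \<le> PD x * (ln (?M s x) - ln (?M r x))"
      using mixture[of x] PD_nonneg[of x] by (cases "PD x = 0") (simp_all add: mult_left_mono)
  qed
  also have "\<dots> = (\<Sum>x\<in>UNIV. PD x * ln (?M s x)) - (\<Sum>x\<in>UNIV. PD x * ln (?M r x))"
    by (simp add: right_diff_distrib sum_subtractf)
  finally show ?thesis
    unfolding s_real prior_ll_real[OF PD_nonneg fin] by simp
qed

lemma post_avg_distr: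
  assumes PD: "is_distr PD" and cond_nonneg: "\<And>x h. 0 \<le> cond tI x h"
    and r_nonneg: "\<And>h. 0 \<le> r h" and fin: "prior_ll PD cond tI r \<noteq> -\<infinity>"
  shows "is_distr (post_avg PD cond tI r)"
    and "0 < post_avg PD cond tI r h \<Longrightarrow> 0 < r h"
    and "PD x \<noteq> 0 \<Longrightarrow> 0 < cond tI x h * r h \<Longrightarrow> 0 < post_avg PD cond tI r h"
proof -
  have PD_nonneg: "\<And>x. 0 \<le> PD x" using PD by (simp add: is_distr_def)
  note marg_pos = prior_ll_marg_pos[OF PD_nonneg fin]
  have term_nonneg: "0 \<le> PD x * (cond tI x h * r h / marg cond tI r x)" for x h
    using PD_nonneg[of x] cond_nonneg[of x h] r_nonneg[of h] marg_pos[of x]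
    by (cases "PD x = 0") simp_all
  have "(\<Sum>h\<in>UNIV. post_avg PD cond tI r h)
      = (\<Sum>x\<in>UNIV. PD x * ((\<Sum>h\<in>UNIV. cond tI x h * r h) / marg cond tI r x))"
    unfolding post_avg_def sum_divide_distrib sum_distrib_left by (rule sum.swap)
  also have "\<dots> = (\<Sum>x\<in>UNIV. PD x)"
  proof (rule sum.cong)
    fix x
    show "PD x * ((\<Sum>h\<in>UNIV. cond tI x h * r h) / marg cond tI r x) = PD x"
      using marg_pos[of x] by (cases "PD x = 0") (simp_all add: marg_def)
  qed simp
  finally show "is_distr (post_avg PD cond tI r)"
    using PD term_nonneg by (simp add: is_distr_def post_avg_def sum_nonneg)
  show "0 < r h" if "0 < post_avg PD cond tI r h"
    using that r_nonneg[of h] by (cases "r h = 0") (simp_all add: post_avg_def)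
  assume "PD x \<noteq> 0" "0 < cond tI x h * r h"
  then have "0 < PD x * (cond tI x h * r h / marg cond tI r x)"
    using PD_nonneg[of x] marg_pos[of x] by simp
  also have "\<dots> \<le> post_avg PD cond tI r h"
    unfolding post_avg_def by (rule member_le_sum[OF _ term_nonneg]) simp_all
  finally show "0 < post_avg PD cond tI r h" .
qed

(* A prior maximizing the log-likelihood is a fixed point of the EM update: otherwise the
   lower bound with s = post_avg r and Gibbs' inequality would give a larger likelihood. *)
lemma optimal_prior_fixed_point:
  assumes PD: "is_distr PD" and cond_nonneg: "\<And>x h. 0 \<le> cond tI x h"
    and r: "is_distr r" and fin: "prior_ll PD cond tI r \<noteq> -\<infinity>"
    and optimal: "\<And>s. is_distr s \<Longrightarrow> prior_ll PD cond tI s \<le> prior_ll PD cond tI r"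
  shows "post_avg PD cond tI r = r"
proof -
  let ?p = "post_avg PD cond tI r"
  have PD_nonneg: "\<And>x. 0 \<le> PD x" and r_nonneg: "\<And>h. 0 \<le> r h"
    using PD r by (simp_all add: is_distr_def)
  note post = post_avg_distr[OF PD cond_nonneg r_nonneg fin]
  have "prior_ll PD cond tI r + ereal (\<Sum>h\<in>UNIV. ?p h * ln (?p h / r h)) \<le> prior_ll PD cond tI ?p"
    using post(1,3) by (intro prior_ll_lower_bound) (simp_all add: PD_nonneg cond_nonneg r_nonneg fin is_distr_def)
  also have "\<dots> \<le> prior_ll PD cond tI r"
    by (rule optimal) (rule post(1))
  finally have "(\<Sum>h\<in>UNIV. ?p h * ln (?p h / r h)) \<le> 0"
    unfolding prior_ll_real[OF PD_nonneg fin] by simp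
  then show ?thesis
    using gibbs_equality[OF post(1) r] post(2) by blast
qed

lemma KL_finite:
  assumes "KL r p \<noteq> \<infinity>"
  shows KL_support: "r h \<noteq> 0 \<Longrightarrow> p h \<noteq> 0"
    and KL_real: "KL r p = ereal (\<Sum>h\<in>UNIV. r h * ln (r h / p h))"
proof -
  show support: "p h \<noteq> 0" if "r h \<noteq> 0" for h
  proof
    assume "p h = 0"
    then show False
      using assms that unfolding KL_def by (simp add: sum_Pinfty) (metis)
  qed
  have "KL r p = (\<Sum>h\<in>UNIV. ereal (r h * ln (r h / p h)))"
    unfolding KL_def by (rule sum.cong) (use support in auto)
  then show "KL r p = ereal (\<Sum>h\<in>UNIV. r h * ln (r h / p h))" by simp
qed

(* At an EM fixed point r, no prior p has a log-likelihood exceeding that of r by more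
   than KL(r || p): this is the EM lower bound with s = p, whose weights are now r itself. *)
lemma prior_ll_gap_le_KL:
  assumes PD_nonneg: "\<And>x. 0 \<le> PD x" and cond_nonneg: "\<And>x h. 0 \<le> cond tI x h"
    and r_nonneg: "\<And>h. 0 \<le> r h" and p_nonneg: "\<And>h. 0 \<le> p h"
    and fin: "prior_ll PD cond tI r \<noteq> -\<infinity>"
    and fixed_point: "post_avg PD cond tI r = r"
  shows "prior_ll PD cond tI r - prior_ll PD cond tI p \<le> KL r p"
proof (cases "KL r p = \<infinity>")
  case False
  have p_pos: "0 < p h" if "0 < r h" for h
    using KL_support[OF False, of h] that p_nonneg[of h] by simp
  have "prior_ll PD cond tI r + ereal (\<Sum>h\<in>UNIV. r h * ln (p h / r h)) \<le> prior_ll PD cond tI p"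
  proof -
    have "0 < r h" if "0 < cond tI x h * r h" for x h
      using that cond_nonneg[of x h] r_nonneg[of h] by (simp add: zero_less_mult_iff)
    then show ?thesis
      using prior_ll_lower_bound[OF PD_nonneg cond_nonneg r_nonneg p_nonneg fin] p_pos
      by (simp add: fixed_point)
  qed
  moreover have "(\<Sum>h\<in>UNIV. r h * ln (p h / r h)) = - (\<Sum>h\<in>UNIV. r h * ln (r h / p h))"
  proof -
    have "ln (p h / r h) = - ln (r h / p h)" for h
      by (metis inverse_divide ln_inverse)
    then show ?thesis by (simp add: sum_negf)
  qed
  ultimately show ?thesis
    unfolding prior_ll_real[OF PD_nonneg fin] KL_real[OF False]
    by (cases "prior_ll PD cond tI p") auto
qed simp

lemma aggr_const:
  assumes "is_distr PD"
  shows "aggr PD (\<lambda>x. s) = s"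
  using assms by (simp add: aggr_def is_distr_def fun_eq_iff flip: sum_distrib_left)

lemma aggr_distr:
  assumes PD: "is_distr PD" and q: "\<And>x. is_distr (q x)"
  shows "is_distr (aggr PD q)"
proof -
  have "(\<Sum>h\<in>UNIV. aggr PD q h) = (\<Sum>x\<in>UNIV. PD x * (\<Sum>h\<in>UNIV. q x h))"
    unfolding aggr_def sum_distrib_left by (subst sum.swap) (simp add: mult.commute)
  also have "\<dots> = 1" using PD q by (simp add: is_distr_def)
  finally show ?thesis
    using PD q by (auto simp: is_distr_def aggr_def intro!: sum_nonneg)
qed

(* Fact (a): the optimal BOLL value dominates the log-likelihood of every model whose lower
   layer is admissible, since a prior s is realised by the conditional q(h|x) = s(h). *)
lemma boll_dominates_prior_ll:
  assumes PD: "is_distr PD"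
    and boll_max: "\<And>tI q. tI \<in> ThI \<Longrightarrow> (\<forall>x. is_distr (q x)) \<Longrightarrow>
                     boll_obj PD cond tI q \<le> boll_obj PD cond tIh qh"
    and "tI \<in> ThI" and "is_distr s"
  shows "prior_ll PD cond tI s \<le> prior_ll PD cond tIh (aggr PD qh)"
  using boll_max[of tI "\<lambda>x. s"] assms(3,4)
  by (simp add: boll_obj_eq_prior_ll aggr_const[OF PD])

theorem theorem1:
  fixes PD :: "'x::finite \<Rightarrow> real"
    and cond :: "'a \<Rightarrow> 'x \<Rightarrow> 'h::finite \<Rightarrow> real"
    and prior :: "'b \<Rightarrow> 'h \<Rightarrow> real"
    and ThI :: "'a set" and ThJ :: "'b set"
    and tIs :: 'a and tJs :: 'b and tIh :: 'a and qh :: "'x \<Rightarrow> 'h \<Rightarrow> real"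
  assumes PD: "is_distr PD"
    and cond_distr: "\<And>tI h. tI \<in> ThI \<Longrightarrow> is_distr (\<lambda>x. cond tI x h)"
    and prior_distr: "\<And>tJ. tJ \<in> ThJ \<Longrightarrow> is_distr (prior tJ)"
    and star_mem: "tIs \<in> ThI" "tJs \<in> ThJ"
    and star_max: "\<And>tI tJ. tI \<in> ThI \<Longrightarrow> tJ \<in> ThJ \<Longrightarrow>
                     loglik PD cond prior tI tJ \<le> loglik PD cond prior tIs tJs"
    and hat_mem: "tIh \<in> ThI" "\<And>x. is_distr (qh x)"
    and hat_max: "\<And>tI q. tI \<in> ThI \<Longrightarrow> (\<forall>x. is_distr (q x)) \<Longrightarrow>
                     boll_obj PD cond tI q \<le> boll_obj PD cond tIh qh"
    and finite_val: "\<bar>boll_obj PD cond tIh qh\<bar> \<noteq> \<infinity>"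
  shows "(\<forall>tJh\<in>ThJ. (\<forall>h. prior tJh h = aggr PD qh h) \<longrightarrow>
            (\<forall>tI\<in>ThI. \<forall>tJ\<in>ThJ. loglik PD cond prior tI tJ \<le> loglik PD cond prior tIh tJh)
          \<and> ((\<forall>tI\<in>ThI. \<forall>tJ\<in>ThJ. loglik PD cond prior tI tJ = loglik PD cond prior tIs tJs
                 \<longrightarrow> (tI, tJ) = (tIs, tJs))
             \<longrightarrow> (tIh, tJh) = (tIs, tJs)))
       \<and> (\<forall>tJ\<in>ThJ. loglik PD cond prior tIs tJs - loglik PD cond prior tIh tJ
                     \<le> KL (aggr PD qh) (prior tJ))"
proof -
  define r where "r = aggr PD qh"
  have r: "is_distr r"
    unfolding r_def using PD hat_mem(2) by (rule aggr_distr)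
  have fin: "prior_ll PD cond tIh r \<noteq> -\<infinity>"
    using finite_val by (auto simp: r_def boll_obj_eq_prior_ll)
  have dominates: "prior_ll PD cond tI s \<le> prior_ll PD cond tIh r"
    if "tI \<in> ThI" "is_distr s" for tI s
    unfolding r_def using PD hat_max that by (rule boll_dominates_prior_ll)
  have ll_le: "loglik PD cond prior tI tJ \<le> prior_ll PD cond tIh r"
    if "tI \<in> ThI" "tJ \<in> ThJ" for tI tJ
    unfolding loglik_eq_prior_ll using that(1) prior_distr[OF that(2)] by (rule dominates)
  have part1: "(\<forall>tI\<in>ThI. \<forall>tJ\<in>ThJ. loglik PD cond prior tI tJ \<le> loglik PD cond prior tIh tJh)
          \<and> ((\<forall>tI\<in>ThI. \<forall>tJ\<in>ThJ. loglik PD cond prior tI tJ = loglik PD cond prior tIs tJs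
                 \<longrightarrow> (tI, tJ) = (tIs, tJs))
             \<longrightarrow> (tIh, tJh) = (tIs, tJs))"
    if tJh: "tJh \<in> ThJ" and matches: "\<forall>h. prior tJh h = aggr PD qh h" for tJh
  proof -
    from matches have "prior tJh = r" by (simp add: r_def fun_eq_iff)
    then have hat_ll: "loglik PD cond prior tIh tJh = prior_ll PD cond tIh r"
      by (simp add: loglik_eq_prior_ll)
    with ll_le[OF star_mem] have "loglik PD cond prior tIs tJs \<le> loglik PD cond prior tIh tJh"
      by simp
    with star_max[OF hat_mem(1) tJh]
    have "loglik PD cond prior tIh tJh = loglik PD cond prior tIs tJs" by (rule antisym)
    then show ?thesis
      using hat_ll ll_le hat_mem(1) tJh by auto
  qed
  have cond_nonneg: "\<And>x h. 0 \<le> cond tIh x h"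
    using cond_distr[OF hat_mem(1)] by (simp add: is_distr_def)
  have fixed_point: "post_avg PD cond tIh r = r"
    using optimal_prior_fixed_point[OF PD cond_nonneg r fin] dominates[OF hat_mem(1)] by blast
  have part2: "loglik PD cond prior tIs tJs - loglik PD cond prior tIh tJ \<le> KL r (prior tJ)"
    if tJ: "tJ \<in> ThJ" for tJ
  proof -
    have "loglik PD cond prior tIs tJs - loglik PD cond prior tIh tJ
        \<le> prior_ll PD cond tIh r - prior_ll PD cond tIh (prior tJ)"
      unfolding loglik_eq_prior_ll[of _ _ _ tIh]
      by (rule ereal_minus_mono[OF ll_le[OF star_mem] order_refl])
    also have "\<dots> \<le> KL r (prior tJ)"
      using PD r prior_distr[OF tJ]
      by (intro prior_ll_gap_le_KL[OF _ cond_nonneg _ _ fin fixed_point]) (simp_all add: is_distr_def)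
    finally show ?thesis .
  qed
  show ?thesis
    using part1 part2 by (simp add: r_def)
qed

end
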